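(* Consider the random basic walk on the infinite hexagonal lattice (the $3$-regular planar honeycomb graph). For any starting vertex and any initial port, the random basic walk cycles with probability $1$.
   Context: Graphs are connected, countable and locally finite; each undirected edge $\{v,w\}$ is regarded as two arcs $v\to w$ and $w\to v$. A labeling assigns, at each vertex $v$ of degree $\deg(v)$, the port numbers $1,\dots,\deg(v)$ bijectively to the arcs leaving $v$ (labels on $v\to w$ and $w\to v$ need not agree). In a random labeling these bijections are chosen uniformly at random, independently for different vertices. Given a labeling, a starting vertex $v_0$ and an initial port $\ell$, the basic walk leaves $v_0$ along the arc labeled $\ell$; thereafter, whenever it enters a vertex $v$ along an arc whose label is $i$, it leaves $v$ along the arc out of $v$ labeled $(i \bmod \deg(v))+1$. The random basic walk is the basic walk for a random labeling. The walk cycles if some arc is traversed twice in the same direction (equivalently, from some point on it is periodic and visits only finitely many vertices); it is transient otherwise. *)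

theory Defs
  imports "HOL-Probability.Probability"
begin

text \<open>A graph is given by its neighbourhood function nbrs (symmetric, locally finite).
  A labeling is a function P with P v w the port number, at v, of the arc v->w;
  for fixed v it is a bijection from the neighbours of v onto 1..deg v, and 0 elsewhere.\<close>

definition deg :: "('a \<Rightarrow> 'a set) \<Rightarrow> 'a \<Rightarrow> nat" where
  "deg nbrs v = card (nbrs v)"

definition local_labels :: "('a \<Rightarrow> 'a set) \<Rightarrow> 'a \<Rightarrow> ('a \<Rightarrow> nat) set" where
  "local_labels nbrs v =
     {p. bij_betw p (nbrs v) {1..deg nbrs v} \<and> (\<forall>w. w \<notin> nbrs v \<longrightarrow> p w = 0)}"

definition port_target :: "('a \<Rightarrow> 'a set) \<Rightarrow> ('a \<Rightarrow> 'a \<Rightarrow> nat) \<Rightarrow> 'a \<Rightarrow> nat \<Rightarrow> 'a" where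
  "port_target nbrs P v j = (THE w. w \<in> nbrs v \<and> P v w = j)"

text \<open>The n-th arc traversed by the basic walk started at v0 with initial port l.
  The arc u->v entered has label P u v; the walk then leaves v along the arc labeled
  ((P u v) mod deg v) + 1.\<close>
fun basic_walk :: "('a \<Rightarrow> 'a set) \<Rightarrow> ('a \<Rightarrow> 'a \<Rightarrow> nat) \<Rightarrow> 'a \<Rightarrow> nat \<Rightarrow> nat \<Rightarrow> 'a \<times> 'a" where
  "basic_walk nbrs P v0 l 0 = (v0, port_target nbrs P v0 l)"
| "basic_walk nbrs P v0 l (Suc n) =
     (let (u, v) = basic_walk nbrs P v0 l n
      in (v, port_target nbrs P v ((P u v mod deg nbrs v) + 1)))"

definition walk_cycles :: "('a \<Rightarrow> 'a set) \<Rightarrow> ('a \<Rightarrow> 'a \<Rightarrow> nat) \<Rightarrow> 'a \<Rightarrow> nat \<Rightarrow> bool" where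
  "walk_cycles nbrs P v0 l \<longleftrightarrow>
     (\<exists>m n. m < n \<and> basic_walk nbrs P v0 l m = basic_walk nbrs P v0 l n)"

definition random_labeling :: "('a \<Rightarrow> 'a set) \<Rightarrow> ('a \<Rightarrow> 'a \<Rightarrow> nat) measure" where
  "random_labeling nbrs = PiM UNIV (\<lambda>v. measure_pmf (pmf_of_set (local_labels nbrs v)))"

text \<open>Brick-wall model of the honeycomb: vertices (i,j,b); the black vertex (i,j,False)
  is adjacent to the white vertices (i,j,True), (i-1,j,True), (i,j-1,True).\<close>
type_synonym hexv = "int \<times> int \<times> bool"

definition hex_nbrs :: "hexv \<Rightarrow> hexv set" where
  "hex_nbrs v = (case v of
      (i, j, False) \<Rightarrow> {(i, j, True), (i - 1, j, True), (i, j - 1, True)}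
    | (i, j, True) \<Rightarrow> {(i, j, False), (i + 1, j, False), (i, j + 1, False)})"

end

theory Submission
  imports Defs "HOL-Combinatorics.Transposition"
begin

text \<open>
  Call a vertex c of a cubic graph a trap for the labeling P if, for every neighbour w, the port
  at w leading back to c is the successor (mod 3) of the port at c leading to w. A walk that
  enters a trap bounces between c and its neighbours forever.

  On the honeycomb the heights level_a, level_b, level_c change by exactly 1 along every edge, and
  a vertex of odd height has two neighbours one level up. When the walk first reaches an odd
  height M, at a vertex c, it has never left c or the two upper neighbours of c, so their labels
  are still fresh: c is a trap with conditional probability 1/27. Hence reaching height M + 2 is
  at most 26/27 times as likely as reaching height M, and every height stays bounded almost
  surely. As level_a + level_b + level_c only takes the values 0 and -1, bounded heights confine
  the walk to finitely many vertices, so some arc is traversed twice.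
\<close>

definition valid_labeling :: "('a \<Rightarrow> 'a set) \<Rightarrow> ('a \<Rightarrow> 'a \<Rightarrow> nat) \<Rightarrow> bool" where
  "valid_labeling nbrs P \<longleftrightarrow> (\<forall>v. P v \<in> local_labels nbrs v)"

lemma local_label_range:
  "p \<in> local_labels nbrs v \<Longrightarrow> w \<in> nbrs v \<Longrightarrow> p w \<in> {1..deg nbrs v}"
  by (auto simp: local_labels_def bij_betw_def)

lemma port_target_spec:
  assumes "valid_labeling nbrs P" "j \<in> {1..deg nbrs v}"
  shows "port_target nbrs P v j \<in> nbrs v \<and> P v (port_target nbrs P v j) = j"
proof -
  have bij: "bij_betw (P v) (nbrs v) {1..deg nbrs v}"
    using assms(1) by (simp add: valid_labeling_def local_labels_def)
  then obtain w where "w \<in> nbrs v" "P v w = j"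
    using assms(2) by (metis bij_betw_iff_bijections)
  with bij_betw_imp_inj_on[OF bij] have "\<exists>!w. w \<in> nbrs v \<and> P v w = j"
    by (auto dest: inj_onD)
  then show ?thesis
    unfolding port_target_def by (rule theI')
qed

lemma port_target_label:
  assumes "valid_labeling nbrs P" "w \<in> nbrs v"
  shows "port_target nbrs P v (P v w) = w"
proof -
  have bij: "bij_betw (P v) (nbrs v) {1..deg nbrs v}"
    using assms(1) by (simp add: valid_labeling_def local_labels_def)
  then have "P v w \<in> {1..deg nbrs v}"
    using assms(2) by (auto simp: bij_betw_def)
  then show ?thesis
    using port_target_spec[OF assms(1)] assms(2) bij_betw_imp_inj_on[OF bij] by (metis inj_onD)
qed

lemma fst_basic_walk_Suc [simp]:
  "fst (basic_walk nbrs P v0 l (Suc n)) = snd (basic_walk nbrs P v0 l n)"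
  by (simp add: case_prod_beta Let_def)

lemma snd_basic_walk_Suc:
  "snd (basic_walk nbrs P v0 l (Suc n)) =
     port_target nbrs P (snd (basic_walk nbrs P v0 l n))
       (P (fst (basic_walk nbrs P v0 l n)) (snd (basic_walk nbrs P v0 l n))
          mod deg nbrs (snd (basic_walk nbrs P v0 l n)) + 1)"
  by (simp add: case_prod_beta Let_def)

declare basic_walk.simps(2) [simp del]

lemma basic_walk_cong:
  assumes "\<And>k. k \<le> n \<Longrightarrow> P (fst (basic_walk nbrs P v0 l k)) = Q (fst (basic_walk nbrs P v0 l k))"
  shows "k \<le> n \<Longrightarrow> basic_walk nbrs Q v0 l k = basic_walk nbrs P v0 l k"
proof (induction k)
  case 0
  then show ?case
    using assms[of 0] by (simp add: port_target_def)
next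
  case (Suc k)
  then have "basic_walk nbrs Q v0 l k = basic_walk nbrs P v0 l k"
    by simp
  moreover have "P (fst (basic_walk nbrs P v0 l k)) = Q (fst (basic_walk nbrs P v0 l k))"
    "P (snd (basic_walk nbrs P v0 l k)) = Q (snd (basic_walk nbrs P v0 l k))"
    using assms[of k] assms[of "Suc k"] Suc.prems by simp_all
  ultimately show ?case
    by (simp add: prod_eq_iff snd_basic_walk_Suc port_target_def)
qed

lemma walk_cycles_if_finite_visits:
  assumes "finite (range (\<lambda>n. snd (basic_walk nbrs P v0 l n)))"
  shows "walk_cycles nbrs P v0 l"
proof (rule ccontr)
  let ?V = "range (\<lambda>n. snd (basic_walk nbrs P v0 l n))"
  assume "\<not> walk_cycles nbrs P v0 l"
  then have "inj (basic_walk nbrs P v0 l)"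
    unfolding walk_cycles_def by (metis injI linorder_neqE_nat)
  moreover have "range (basic_walk nbrs P v0 l) \<subseteq> insert v0 ?V \<times> ?V"
  proof (rule image_subsetI)
    fix n
    have "fst (basic_walk nbrs P v0 l n) \<in> insert v0 ?V"
      by (cases n) auto
    then show "basic_walk nbrs P v0 l n \<in> insert v0 ?V \<times> ?V"
      by (simp add: mem_Times_iff)
  qed
  then have "finite (range (basic_walk nbrs P v0 l))"
    using assms by (auto intro: finite_subset)
  ultimately show False
    using finite_imageD by blast
qed

lemma prob_space_random_labeling: "prob_space (random_labeling nbrs)"
  unfolding random_labeling_def by (rule prob_space_PiM) (simp add: prob_space_measure_pmf)

lemma space_random_labeling [simp]: "space (random_labeling nbrs) = UNIV"
  by (simp add: random_labeling_def space_PiM PiE_UNIV_domain)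

lemma measurable_local_label:
  "(\<lambda>P. F (P v)) \<in> random_labeling nbrs \<rightarrow>\<^sub>M count_space UNIV"
proof -
  have "(\<lambda>P. P v) \<in> random_labeling nbrs \<rightarrow>\<^sub>M measure_pmf (pmf_of_set (local_labels nbrs v))"
    unfolding random_labeling_def by (rule measurable_component_singleton) simp
  then show ?thesis
    by (rule measurable_compose) (simp add: measurable_cong_sets[OF sets_measure_pmf_count_space refl])
qed

lemma pred_two_labels:
  "Measurable.pred (random_labeling nbrs) (\<lambda>P. R (P u w) (P v x))"
  by (rule measurable_compose_countable[where f = "\<lambda>k P. R k (P v x)" and g = "\<lambda>P. P u w"])
     (rule measurable_local_label)+

lemma measurable_basic_walk:
  fixes nbrs :: "'a::countable \<Rightarrow> 'a set"
  shows "(\<lambda>P. F (basic_walk nbrs P v0 l n)) \<in> random_labeling nbrs \<rightarrow>\<^sub>M count_space UNIV"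
proof -
  have "(\<lambda>P. basic_walk nbrs P v0 l n) \<in> random_labeling nbrs \<rightarrow>\<^sub>M count_space UNIV"
  proof (induction n)
    case 0
    show ?case
      unfolding basic_walk.simps port_target_def by (rule measurable_local_label)
  next
    case (Suc n)
    have step: "(\<lambda>P. (snd x, port_target nbrs P (snd x) (P (fst x) (snd x) mod deg nbrs (snd x) + 1)))
        \<in> random_labeling nbrs \<rightarrow>\<^sub>M count_space UNIV" for x :: "'a \<times> 'a"
    proof (rule measurable_compose_countable[where f = "\<lambda>j P. (snd x, port_target nbrs P (snd x) j)"
          and g = "\<lambda>P. P (fst x) (snd x) mod deg nbrs (snd x) + 1"])
      show "(\<lambda>P. (snd x, port_target nbrs P (snd x) j)) \<in> random_labeling nbrs \<rightarrow>\<^sub>M count_space UNIV"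
        for j
        unfolding port_target_def by (rule measurable_local_label)
    qed (rule measurable_local_label)
    show ?case
      unfolding basic_walk.simps Let_def case_prod_beta
      by (rule measurable_compose_countable[OF step Suc.IH])
  qed
  then show ?thesis
    by (rule measurable_compose) simp
qed

lemma sets_walk_cycles:
  fixes nbrs :: "'a::countable \<Rightarrow> 'a set"
  shows "{P \<in> space (random_labeling nbrs). walk_cycles nbrs P v0 l} \<in> sets (random_labeling nbrs)"
proof -
  have "Measurable.pred (random_labeling nbrs)
      (\<lambda>P. basic_walk nbrs P v0 l m = basic_walk nbrs P v0 l n)" for m n
  proof -
    have "Measurable.pred (random_labeling nbrs) (\<lambda>P. x = basic_walk nbrs P v0 l n)" for x
      by (rule measurable_basic_walk)
    from measurable_compose_countable[OF this measurable_basic_walk[where F = id]]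
    show ?thesis
      by (simp add: id_def)
  qed
  then have "Measurable.pred (random_labeling nbrs) (\<lambda>P. walk_cycles nbrs P v0 l)"
    unfolding walk_cycles_def by measurable
  then show ?thesis
    by (simp add: pred_def)
qed

lemma finite_local_labels:
  assumes "finite (nbrs v)"
  shows "finite (local_labels nbrs v)"
proof (rule finite_subset)
  show "local_labels nbrs v \<subseteq>
      {p. \<forall>w. (w \<in> nbrs v \<longrightarrow> p w \<in> {1..deg nbrs v}) \<and> (w \<notin> nbrs v \<longrightarrow> p w = 0)}"
    by (auto simp: local_labels_def bij_betw_def)
  show "finite {p. \<forall>w. (w \<in> nbrs v \<longrightarrow> p w \<in> {1..deg nbrs v}) \<and> (w \<notin> nbrs v \<longrightarrow> p w = 0)}"
    using assms by (intro finite_set_of_finite_funs) auto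
qed

lemma local_labels_nonempty:
  assumes "finite (nbrs v)"
  shows "local_labels nbrs v \<noteq> {}"
proof -
  have "card (nbrs v) = card {1..deg nbrs v}"
    by (simp add: deg_def)
  then obtain h where "bij_betw h (nbrs v) {1..deg nbrs v}"
    using finite_same_card_bij[OF assms finite_atLeastAtMost] by blast
  then have "bij_betw (\<lambda>w. if w \<in> nbrs v then h w else 0) (nbrs v) {1..deg nbrs v}"
    by (rule bij_betw_cong[THEN iffD1, rotated]) simp
  then have "(\<lambda>w. if w \<in> nbrs v then h w else 0) \<in> local_labels nbrs v"
    unfolding local_labels_def by simp
  then show ?thesis
    by blast
qed

lemma AE_valid_labeling:
  fixes nbrs :: "'a::countable \<Rightarrow> 'a set"
  assumes "\<And>v. finite (nbrs v)"
  shows "AE P in random_labeling nbrs. valid_labeling nbrs P"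
proof -
  have "AE P in random_labeling nbrs. P v \<in> local_labels nbrs v" for v
  proof -
    have "AE p in measure_pmf (pmf_of_set (local_labels nbrs v)). p \<in> local_labels nbrs v"
      using finite_local_labels[OF assms] local_labels_nonempty[OF assms]
      by (simp add: AE_measure_pmf_iff)
    then show ?thesis
      unfolding random_labeling_def
      by (intro AE_PiM_component) (simp_all add: prob_space_measure_pmf)
  qed
  then show ?thesis
    unfolding valid_labeling_def by (simp add: AE_all_countable)
qed

lemma transpose_comp_local_label:
  assumes "p \<in> local_labels nbrs v" "j \<in> {1..deg nbrs v}" "k \<in> {1..deg nbrs v}"
  shows "Transposition.transpose j k \<circ> p \<in> local_labels nbrs v"
proof -
  have "bij_betw p (nbrs v) {1..deg nbrs v}"
    using assms(1) by (simp add: local_labels_def)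
  moreover have "bij_betw (Transposition.transpose j k) {1..deg nbrs v} {1..deg nbrs v}"
    using assms(2,3) by simp
  ultimately have "bij_betw (Transposition.transpose j k \<circ> p) (nbrs v) {1..deg nbrs v}"
    by (rule bij_betw_trans)
  moreover have "(Transposition.transpose j k \<circ> p) w = 0" if "w \<notin> nbrs v" for w
    using assms that by (auto simp: local_labels_def transpose_def)
  ultimately show ?thesis
    by (simp add: local_labels_def)
qed

lemma card_local_labels_port:
  assumes "finite (nbrs v)" "s \<in> nbrs v" "k \<in> {1..deg nbrs v}"
  shows "card (local_labels nbrs v) = deg nbrs v * card {p \<in> local_labels nbrs v. p s = k}"
proof -
  let ?L = "local_labels nbrs v"
  let ?A = "\<lambda>j. {p \<in> ?L. p s = j}"
  have "card (?A j) = card (?A k)" if j: "j \<in> {1..deg nbrs v}" for j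
  proof (rule bij_betw_same_card)
    show "bij_betw ((\<circ>) (Transposition.transpose j k)) (?A j) (?A k)"
      by (rule bij_betw_byWitness[where f' = "(\<circ>) (Transposition.transpose j k)"])
         (use j assms(3) in \<open>auto simp: o_assoc[symmetric] intro: transpose_comp_local_label\<close>)
  qed
  moreover have "card (\<Union>j\<in>{1..deg nbrs v}. ?A j) = (\<Sum>j\<in>{1..deg nbrs v}. card (?A j))"
    using finite_local_labels[of nbrs v, OF assms(1)] by (intro card_UN_disjoint) auto
  moreover have "(\<Union>j\<in>{1..deg nbrs v}. ?A j) = ?L"
    using local_label_range[of _ nbrs v s] assms(2) by auto
  ultimately show ?thesis
    by simp
qed

lemma emeasure_random_labeling_section:
  assumes S: "S \<in> sets (random_labeling nbrs)"
  shows "emeasure (random_labeling nbrs) S =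
    (\<integral>\<^sup>+X. emeasure (measure_pmf (pmf_of_set (local_labels nbrs i))) {x. X(i := x) \<in> S}
      \<partial>(\<Pi>\<^sub>M v\<in>UNIV - {i}. measure_pmf (pmf_of_set (local_labels nbrs v))))"
proof -
  let ?M = "\<lambda>v. measure_pmf (pmf_of_set (local_labels nbrs v))"
  let ?N = "\<Pi>\<^sub>M v\<in>UNIV - {i}. ?M v"
  let ?upd = "\<lambda>(x, X). X(i := x)"
  have distr: "distr (?M i \<Otimes>\<^sub>M ?N) (random_labeling nbrs) ?upd = random_labeling nbrs"
    using distr_pair_PiM_eq_PiM[of "UNIV - {i}" ?M i]
    by (simp add: prob_space_measure_pmf insert_absorb random_labeling_def)
  have upd: "?upd \<in> ?M i \<Otimes>\<^sub>M ?N \<rightarrow>\<^sub>M random_labeling nbrs"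
  proof -
    have "(\<lambda>z. (snd z)(i := fst z)) \<in> ?M i \<Otimes>\<^sub>M ?N \<rightarrow>\<^sub>M (\<Pi>\<^sub>M v\<in>UNIV. ?M v)"
      by (rule measurable_fun_upd[where J = "UNIV - {i}"]) auto
    then show ?thesis
      by (simp add: random_labeling_def case_prod_beta')
  qed
  interpret pair_sigma_finite "?M i" ?N
    unfolding pair_sigma_finite_def
    by (auto intro!: prob_space_imp_sigma_finite prob_space_PiM simp: prob_space_measure_pmf)
  have "emeasure (random_labeling nbrs) S = emeasure (?M i \<Otimes>\<^sub>M ?N) (?upd -` S \<inter> space (?M i \<Otimes>\<^sub>M ?N))"
    by (subst distr[symmetric]) (rule emeasure_distr[OF upd S])
  also have "\<dots> = (\<integral>\<^sup>+X. emeasure (?M i) ((\<lambda>x. (x, X)) -` (?upd -` S \<inter> space (?M i \<Otimes>\<^sub>M ?N))) \<partial>?N)"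
    by (rule emeasure_pair_measure_alt2[OF measurable_sets[OF upd S]])
  also have "\<dots> = (\<integral>\<^sup>+X. emeasure (?M i) {x. X(i := x) \<in> S} \<partial>?N)"
    by (rule nn_integral_cong) (auto simp: space_pair_measure intro!: arg_cong2[where f = emeasure])
  finally show ?thesis .
qed

lemma emeasure_random_labeling_Int_resample:
  assumes T: "T \<in> sets (random_labeling nbrs)" and T_inv: "\<And>P x. P(i := x) \<in> T \<longleftrightarrow> P \<in> T"
    and E: "E \<in> sets (random_labeling nbrs)"
    and E_section: "\<And>P. emeasure (measure_pmf (pmf_of_set (local_labels nbrs i))) {x. P(i := x) \<in> E} = q"
  shows "emeasure (random_labeling nbrs) (T \<inter> E) = q * emeasure (random_labeling nbrs) T"
proof -
  let ?M = "\<lambda>v. measure_pmf (pmf_of_set (local_labels nbrs v))"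
  let ?N = "\<Pi>\<^sub>M v\<in>UNIV - {i}. ?M v"
  define T' where "T' = {X \<in> space ?N. X(i := undefined) \<in> T}"
  have "(\<lambda>X. (id X)(i := (\<lambda>_. undefined) X)) \<in> ?N \<rightarrow>\<^sub>M (\<Pi>\<^sub>M v\<in>UNIV. ?M v)"
    by (rule measurable_fun_upd[where J = "UNIV - {i}"]) auto
  then have "(\<lambda>X. X(i := undefined)) \<in> ?N \<rightarrow>\<^sub>M random_labeling nbrs"
    by (simp add: random_labeling_def)
  from measurable_sets[OF this T] have T': "T' \<in> sets ?N"
    by (simp add: T'_def vimage_def Int_def conj_commute)
  have section_T: "X(i := x) \<in> T \<longleftrightarrow> X \<in> T'" if "X \<in> space ?N" for X x
    using that T_inv[of X x] T_inv[of X undefined] by (simp add: T'_def)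
  have section_TE: "emeasure (?M i) {x. X(i := x) \<in> T \<inter> E} = q * indicator T' X"
    if "X \<in> space ?N" for X
    by (cases "X \<in> T'") (simp_all add: section_T[OF that] E_section)
  have section_T': "emeasure (?M i) {x. X(i := x) \<in> T} = indicator T' X" if "X \<in> space ?N" for X
    by (cases "X \<in> T'") (simp_all add: section_T[OF that] measure_pmf.emeasure_space_1[simplified])
  have "emeasure (random_labeling nbrs) (T \<inter> E) = (\<integral>\<^sup>+X. q * indicator T' X \<partial>?N)"
    by (subst emeasure_random_labeling_section[OF sets.Int[OF T E], of i])
      (rule nn_integral_cong, erule section_TE)
  also have "\<dots> = q * emeasure ?N T'"
    using T' by (rule nn_integral_cmult_indicator)
  also have "emeasure ?N T' = emeasure (random_labeling nbrs) T"
    by (subst emeasure_random_labeling_section[OF T, of i], subst nn_integral_indicator[OF T', symmetric])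
      (rule nn_integral_cong, erule section_T'[symmetric])
  finally show ?thesis .
qed

section \<open>Traps in cubic graphs\<close>

lemma mod3_succ_iff: "(a::nat) mod 3 = (b + 1) mod 3 \<longleftrightarrow> b mod 3 = (a + 2) mod 3"
proof
  assume "a mod 3 = (b + 1) mod 3"
  then have "(a + 2) mod 3 = (b + 1 + 2) mod 3"
    by (rule mod_add_cong) (rule refl)
  then show "b mod 3 = (a + 2) mod 3"
    by (simp add: add.assoc)
next
  assume "b mod 3 = (a + 2) mod 3"
  then have "(b + 1) mod 3 = (a + 2 + 1) mod 3"
    by (rule mod_add_cong) (rule refl)
  then show "a mod 3 = (b + 1) mod 3"
    by (simp add: add.assoc)
qed

locale cubic_graph =
  fixes nbrs :: "'a::countable \<Rightarrow> 'a set"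
  assumes nbrs_sym: "w \<in> nbrs v \<Longrightarrow> v \<in> nbrs w"
    and card_nbrs: "card (nbrs v) = 3"
begin

abbreviation \<mu> :: "('a \<Rightarrow> 'a \<Rightarrow> nat) measure" where
  "\<mu> \<equiv> random_labeling nbrs"

lemma finite_nbrs [simp]: "finite (nbrs v)"
  using card_nbrs[of v] by (metis card.infinite zero_neq_numeral)

lemma deg_eq_3 [simp]: "deg nbrs v = 3"
  by (simp add: deg_def card_nbrs)

lemma emeasure_label_mod3:
  assumes "s \<in> nbrs v" "r < 3"
  shows "emeasure (measure_pmf (pmf_of_set (local_labels nbrs v))) {p. p s mod 3 = r} = ennreal (1 / 3)"
proof -
  let ?L = "local_labels nbrs v"
  define k where "k = (if r = 0 then 3 else r)"
  have k: "k \<in> {1..3}"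
    using assms(2) by (auto simp: k_def)
  have "p s mod 3 = r \<longleftrightarrow> p s = k" if "p \<in> ?L" for p
  proof -
    have "p s \<in> {1, 2, 3}" "r \<in> {0, 1, 2}"
      using local_label_range[OF that assms(1)] assms(2) by auto
    then show ?thesis
      by (auto simp: k_def)
  qed
  then have "?L \<inter> {p. p s mod 3 = r} = {p \<in> ?L. p s = k}"
    by auto
  moreover have "card ?L = 3 * card {p \<in> ?L. p s = k}"
    using card_local_labels_port[of nbrs v s k] assms(1) k by simp
  moreover have "card ?L \<noteq> 0"
    using finite_local_labels[of nbrs v] local_labels_nonempty[of nbrs v] by simp
  ultimately show ?thesis
    using finite_local_labels[of nbrs v] local_labels_nonempty[of nbrs v]
    by (simp add: emeasure_pmf_of_set ennreal_of_nat_eq_real_of_nat)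
qed

lemma emeasure_Int_label_mod3:
  assumes "s \<in> nbrs i" "T \<in> sets \<mu>" "\<And>P x. P(i := x) \<in> T \<longleftrightarrow> P \<in> T"
    and "{P. P i s mod 3 = g P mod 3} \<in> sets \<mu>" "\<And>P x. g (P(i := x)) = g P"
  shows "emeasure \<mu> (T \<inter> {P. P i s mod 3 = g P mod 3}) = ennreal (1 / 3) * emeasure \<mu> T"
  by (rule emeasure_random_labeling_Int_resample[where i = i]) (simp_all add: assms emeasure_label_mod3)

definition trap :: "('a \<Rightarrow> 'a \<Rightarrow> nat) \<Rightarrow> 'a \<Rightarrow> bool" where
  "trap P c \<longleftrightarrow> (\<forall>w\<in>nbrs c. P w c mod 3 = (P c w + 1) mod 3)"

lemma sets_trap: "{P. trap P c} \<in> sets \<mu>"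
proof -
  have "{P \<in> space \<mu>. \<forall>w\<in>nbrs c. P w c mod 3 = (P c w + 1) mod 3} \<in> sets \<mu>"
    using pred_two_labels[where R = "\<lambda>a b. a mod 3 = (b + 1) mod 3" and w = c and v = c]
    by (intro sets.sets_Collect_finite_All finite_nbrs) (simp add: pred_def)
  then show ?thesis
    by (simp add: trap_def)
qed

definition height_function :: "('a \<Rightarrow> int) \<Rightarrow> bool" where
  "height_function f \<longleftrightarrow> (\<forall>v. \<forall>w\<in>nbrs v. \<bar>f w - f v\<bar> = 1) \<and>
     (\<forall>c. odd (f c) \<longrightarrow>
        (\<exists>w1 w2. w1 \<noteq> w2 \<and> w1 \<in> nbrs c \<and> w2 \<in> nbrs c \<and> f w1 = f c + 1 \<and> f w2 = f c + 1))"

lemma height_step: "height_function f \<Longrightarrow> w \<in> nbrs v \<Longrightarrow> \<bar>f w - f v\<bar> = 1"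
  by (simp add: height_function_def)

end

locale cubic_walk = cubic_graph nbrs for nbrs :: "'a::countable \<Rightarrow> 'a set" +
  fixes v0 :: 'a and l :: nat
  assumes initial_port: "l \<in> {1..3}"
begin

abbreviation walk :: "('a \<Rightarrow> 'a \<Rightarrow> nat) \<Rightarrow> nat \<Rightarrow> 'a \<times> 'a" where
  "walk P n \<equiv> basic_walk nbrs P v0 l n"

lemma walk_arc:
  assumes "valid_labeling nbrs P"
  shows "snd (walk P n) \<in> nbrs (fst (walk P n))"
proof (cases n)
  case 0
  then show ?thesis
    using port_target_spec[OF assms] initial_port by simp
next
  case (Suc m)
  then show ?thesis
    using port_target_spec[OF assms] by (simp add: snd_basic_walk_Suc)
qed

lemma trap_bounce:
  assumes P: "valid_labeling nbrs P" and "trap P c" "snd (walk P n) = c"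
  shows "snd (walk P (Suc (Suc n))) = c"
proof -
  define y where "y = snd (walk P (Suc n))"
  have y: "y \<in> nbrs c"
    using walk_arc[OF P, of "Suc n"] assms(3) by (simp add: y_def)
  have "P y c \<in> {1..3}"
    using local_label_range[of "P y" nbrs y c] P nbrs_sym[OF y] by (simp add: valid_labeling_def)
  moreover have "P y c mod 3 = (P c y + 1) mod 3"
    using assms(2) y by (simp add: trap_def)
  ultimately have "P c y mod 3 + 1 = P y c"
    by auto presburger
  moreover have "snd (walk P (Suc (Suc n))) = port_target nbrs P y (P c y mod 3 + 1)"
    by (simp add: snd_basic_walk_Suc[of _ _ _ _ "Suc n"] assms(3) y_def)
  ultimately show ?thesis
    using port_target_label[OF P nbrs_sym[OF y]] by simp
qed

lemma trap_confines:
  assumes P: "valid_labeling nbrs P" and "trap P c" "snd (walk P n) = c" "n \<le> m"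
  shows "snd (walk P m) \<in> insert c (nbrs c)"
proof -
  have even: "snd (walk P (n + 2 * k)) = c" for k
    by (induction k) (simp_all add: assms(3) trap_bounce[OF P assms(2)])
  have "\<exists>k. m = n + 2 * k \<or> m = Suc (n + 2 * k)"
    using assms(4) by presburger
  then obtain k where "m = n + 2 * k \<or> m = Suc (n + 2 * k)"
    by blast
  then show ?thesis
    using even walk_arc[OF P, of m] by auto
qed

section \<open>Climbing the levels of a height function\<close>

definition reaches :: "('a \<Rightarrow> int) \<Rightarrow> int \<Rightarrow> ('a \<Rightarrow> 'a \<Rightarrow> nat) set" where
  "reaches f M = {P. \<exists>n. M \<le> f (snd (walk P n))}"

text \<open>For f c = M, this is the event that c is the first vertex of height at least M
  entered by the walk.\<close>

definition first_reaches_at :: "('a \<Rightarrow> int) \<Rightarrow> int \<Rightarrow> 'a \<Rightarrow> ('a \<Rightarrow> 'a \<Rightarrow> nat) set" where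
  "first_reaches_at f M c = {P. \<exists>n. snd (walk P n) = c \<and> (\<forall>m<n. f (snd (walk P m)) < M)}"

lemma sets_reaches: "reaches f M \<in> sets \<mu>"
proof -
  have "Measurable.pred \<mu> (\<lambda>P. \<exists>n. M \<le> f (snd (walk P n)))"
    using measurable_basic_walk[where F = "\<lambda>x. M \<le> f (snd x)", measurable] by measurable
  then show ?thesis
    by (simp add: reaches_def pred_def)
qed

lemma sets_first_reaches_at: "first_reaches_at f M c \<in> sets \<mu>"
proof -
  have "Measurable.pred \<mu> (\<lambda>P. \<exists>n. snd (walk P n) = c \<and> (\<forall>m<n. f (snd (walk P m)) < M))"
    using measurable_basic_walk[where F = "\<lambda>x. snd x = c", measurable]
      measurable_basic_walk[where F = "\<lambda>x. f (snd x) < M", measurable]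
    by measurable
  then show ?thesis
    by (simp add: first_reaches_at_def pred_def)
qed

lemma first_reaches_at_cong:
  assumes "\<And>v. f v < M \<Longrightarrow> P v = Q v" "f v0 < M" "P \<in> first_reaches_at f M c"
  shows "Q \<in> first_reaches_at f M c"
proof -
  obtain n where n: "snd (walk P n) = c" "\<forall>m<n. f (snd (walk P m)) < M"
    using assms(3) by (auto simp: first_reaches_at_def)
  have "f (fst (walk P k)) < M" if "k \<le> n" for k
    using that assms(2) n(2) by (cases k) auto
  then have "walk Q k = walk P k" if "k \<le> n" for k
    using assms(1) that by (intro basic_walk_cong[where n = n]) auto
  then have "snd (walk Q n) = c" "\<forall>m<n. f (snd (walk Q m)) < M"
    using n by simp_all
  then show ?thesis
    unfolding first_reaches_at_def by blast
qed

lemma first_reaches_at_fun_upd: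
  assumes "M \<le> f x" "f v0 < M"
  shows "P(x := q) \<in> first_reaches_at f M c \<longleftrightarrow> P \<in> first_reaches_at f M c"
proof -
  have agree: "(P(x := q)) v = P v" if "f v < M" for v
    using that assms(1) by auto
  show ?thesis
    using first_reaches_at_cong[of f M "P(x := q)" P c, OF agree assms(2)]
      first_reaches_at_cong[of f M P "P(x := q)" c, OF agree[symmetric] assms(2)] by blast
qed

lemma first_reaches_at_unique:
  assumes "f c = M" "f c' = M" "P \<in> first_reaches_at f M c" "P \<in> first_reaches_at f M c'"
  shows "c = c'"
proof -
  obtain n where n: "snd (walk P n) = c" "\<forall>m<n. f (snd (walk P m)) < M"
    using assms(3) by (auto simp: first_reaches_at_def)
  obtain n' where n': "snd (walk P n') = c'" "\<forall>m<n'. f (snd (walk P m)) < M"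
    using assms(4) by (auto simp: first_reaches_at_def)
  have "n = n'"
    using n n' assms(1,2) by (metis less_irrefl linorder_neqE_nat)
  then show ?thesis
    using n n' by simp
qed

lemma reaches_imp_untrapped_first_entry:
  assumes f: "height_function f" and P: "valid_labeling nbrs P"
    and "f v0 < M" "P \<in> reaches f (M + 2)"
  shows "\<exists>c. f c = M \<and> P \<in> first_reaches_at f M c \<and> \<not> trap P c"
proof -
  obtain n1 where n1: "M + 2 \<le> f (snd (walk P n1))"
    using assms(4) by (auto simp: reaches_def)
  define n0 where "n0 = (LEAST n. M \<le> f (snd (walk P n)))"
  define c where "c = snd (walk P n0)"
  have "M \<le> f c"
    unfolding c_def n0_def by (rule LeastI[of _ n1]) (use n1 in simp)
  have before: "f (snd (walk P m)) < M" if "m < n0" for m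
    using not_less_Least[OF that[unfolded n0_def]] by simp
  have "f (fst (walk P n0)) < M"
    using assms(3) before by (cases n0) auto
  moreover have "\<bar>f c - f (fst (walk P n0))\<bar> = 1"
    using height_step[OF f walk_arc[OF P]] by (simp add: c_def)
  ultimately have fc: "f c = M"
    using \<open>M \<le> f c\<close> by linarith
  moreover have "P \<in> first_reaches_at f M c"
    unfolding first_reaches_at_def c_def using before by blast
  moreover have "\<not> trap P c"
  proof
    assume "trap P c"
    have bounded: "f (snd (walk P m)) \<le> M + 1" for m
    proof (cases "n0 \<le> m")
      case True
      then have "snd (walk P m) \<in> insert c (nbrs c)"
        using trap_confines[OF P \<open>trap P c\<close>] by (simp add: c_def)
      then show ?thesis
        using height_step[OF f, of _ c] fc by force
    next
      case False
      then show ?thesis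
        using before[of m] by simp
    qed
    show False
      using bounded[of n1] n1 by linarith
  qed
  ultimately show ?thesis
    by blast
qed

lemma emeasure_first_reaches_at_Int_trap:
  assumes f: "height_function f" and "f v0 < M" "f c = M" "odd M"
  shows "emeasure \<mu> (first_reaches_at f M c \<inter> {P. trap P c}) =
    ennreal (1 / 27) * emeasure \<mu> (first_reaches_at f M c)"
proof -
  obtain w1 w2 where w: "w1 \<noteq> w2" "w1 \<in> nbrs c" "w2 \<in> nbrs c" "f w1 = M + 1" "f w2 = M + 1"
    using f assms(3,4) unfolding height_function_def by blast
  have "card (nbrs c - {w1, w2}) = 1"
    using w(1-3) card_nbrs[of c] by (simp add: card_Diff_subset)
  then obtain u where u: "nbrs c - {w1, w2} = {u}"
    by (rule card_1_singletonE)
  then have nbrs_c: "nbrs c = {u, w1, w2}" and "u \<noteq> w1" "u \<noteq> w2" "u \<in> nbrs c"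
    using w(2,3) by auto
  have "u \<noteq> c" "w1 \<noteq> c" "w2 \<noteq> c"
    using height_step[OF f \<open>u \<in> nbrs c\<close>] w(4,5) assms(3) by auto
  define H where "H = first_reaches_at f M c"
  txt \<open>The trap condition at the lower neighbour u constrains the labels at c, those at the
    upper neighbours constrain the labels there; the walk has left none of these vertices yet.\<close>
  define E1 :: "('a \<Rightarrow> 'a \<Rightarrow> nat) set" where "E1 = {P. P c u mod 3 = (P u c + 2) mod 3}"
  define E2 :: "('a \<Rightarrow> 'a \<Rightarrow> nat) set" where "E2 = {P. P w1 c mod 3 = (P c w1 + 1) mod 3}"
  define E3 :: "('a \<Rightarrow> 'a \<Rightarrow> nat) set" where "E3 = {P. P w2 c mod 3 = (P c w2 + 1) mod 3}"
  have "trap P c \<longleftrightarrow> P \<in> E1 \<inter> E2 \<inter> E3" for P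
  proof -
    have "trap P c \<longleftrightarrow> P u c mod 3 = (P c u + 1) mod 3 \<and> P \<in> E2 \<inter> E3"
      unfolding trap_def nbrs_c E2_def E3_def by simp
    then show ?thesis
      unfolding mod3_succ_iff E1_def by blast
  qed
  then have trap_eq: "{P. trap P c} = E1 \<inter> E2 \<inter> E3"
    by blast
  have sets: "H \<in> sets \<mu>" "E1 \<in> sets \<mu>" "E2 \<in> sets \<mu>" "E3 \<in> sets \<mu>"
    unfolding H_def E1_def E2_def E3_def
    using sets_first_reaches_at pred_two_labels[where R = "\<lambda>a b. a mod 3 = (b + 2) mod 3"]
      pred_two_labels[where R = "\<lambda>a b. a mod 3 = (b + 1) mod 3"] by (simp_all add: pred_def)
  have H_upd: "P(x := q) \<in> H \<longleftrightarrow> P \<in> H" if "M \<le> f x" for P x q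
    unfolding H_def using first_reaches_at_fun_upd[OF that assms(2)] .
  have "emeasure \<mu> (H \<inter> E1) = ennreal (1 / 3) * emeasure \<mu> H"
    unfolding E1_def
    by (rule emeasure_Int_label_mod3[where g = "\<lambda>P. P u c + 2"])
      (use sets[unfolded E1_def] \<open>u \<in> nbrs c\<close> \<open>u \<noteq> c\<close> assms(3) H_upd in auto)
  moreover have "emeasure \<mu> (H \<inter> E1 \<inter> E2) = ennreal (1 / 3) * emeasure \<mu> (H \<inter> E1)"
    unfolding E2_def
    by (rule emeasure_Int_label_mod3[where g = "\<lambda>P. P c w1 + 1"])
      (use sets[unfolded E1_def E2_def] nbrs_sym[OF w(2)] \<open>u \<noteq> w1\<close> \<open>w1 \<noteq> c\<close> w(4) H_upd
        in \<open>auto simp: E1_def\<close>)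
  moreover have "emeasure \<mu> (H \<inter> E1 \<inter> E2 \<inter> E3) = ennreal (1 / 3) * emeasure \<mu> (H \<inter> E1 \<inter> E2)"
    unfolding E3_def
    by (rule emeasure_Int_label_mod3[where g = "\<lambda>P. P c w2 + 1"])
      (use sets[unfolded E1_def E2_def E3_def] nbrs_sym[OF w(3)] \<open>u \<noteq> w2\<close> \<open>w2 \<noteq> c\<close> w(1,5) H_upd
        in \<open>auto simp: E1_def E2_def\<close>)
  ultimately show ?thesis
    unfolding H_def[symmetric] trap_eq
    by (simp add: Int_assoc mult.assoc[symmetric] flip: ennreal_mult)
qed

lemma emeasure_first_reaches_at_untrapped:
  assumes "height_function f" "f v0 < M" "f c = M" "odd M"
  shows "emeasure \<mu> (first_reaches_at f M c - {P. trap P c}) =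
    ennreal (26 / 27) * emeasure \<mu> (first_reaches_at f M c)"
proof -
  interpret prob_space \<mu>
    by (rule prob_space_random_labeling)
  let ?H = "first_reaches_at f M c"
  have sets: "?H \<in> sets \<mu>" "?H \<inter> {P. trap P c} \<in> sets \<mu>"
    using sets_first_reaches_at sets_trap by auto
  have "measure \<mu> (?H \<inter> {P. trap P c}) = measure \<mu> ?H / 27"
    using emeasure_first_reaches_at_Int_trap[OF assms]
    by (simp add: emeasure_eq_measure flip: ennreal_mult)
  moreover have "?H - {P. trap P c} = ?H - (?H \<inter> {P. trap P c})"
    by blast
  ultimately have "measure \<mu> (?H - {P. trap P c}) = 26 / 27 * measure \<mu> ?H"
    using sets by (simp add: finite_measure_Diff)
  then show ?thesis
    by (simp add: emeasure_eq_measure flip: ennreal_mult)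
qed

lemma emeasure_reaches_step:
  assumes f: "height_function f" and "f v0 < M" "odd M"
  shows "emeasure \<mu> (reaches f (M + 2)) \<le> ennreal (26 / 27) * emeasure \<mu> (reaches f M)"
proof -
  let ?C = "{c. f c = M}"
  let ?H = "first_reaches_at f M"
  let ?X = "\<lambda>c. ?H c - {P. trap P c}"
  have X_sets: "?X c \<in> sets \<mu>" for c
    using sets_first_reaches_at sets_trap by blast
  have disjoint: "disjoint_family_on ?H ?C" "disjoint_family_on ?X ?C"
    unfolding disjoint_family_on_def using first_reaches_at_unique by blast+
  have "AE P in \<mu>. P \<in> reaches f (M + 2) \<longrightarrow> P \<in> (\<Union>c\<in>?C. ?X c)"
    using AE_valid_labeling[OF finite_nbrs]
  proof eventually_elim
    case (elim P)
    then show ?case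
      using reaches_imp_untrapped_first_entry[OF f elim assms(2)] by blast
  qed
  then have "emeasure \<mu> (reaches f (M + 2)) \<le> emeasure \<mu> (\<Union>c\<in>?C. ?X c)"
    by (rule emeasure_mono_AE) (rule sets.countable_UN''[OF countableI_type X_sets])
  also have "\<dots> = (\<integral>\<^sup>+c. emeasure \<mu> (?X c) \<partial>count_space ?C)"
    by (rule emeasure_UN_countable[OF X_sets countableI_type disjoint(2)])
  also have "\<dots> = (\<integral>\<^sup>+c. ennreal (26 / 27) * emeasure \<mu> (?H c) \<partial>count_space ?C)"
    using emeasure_first_reaches_at_untrapped[OF f assms(2) _ assms(3)] by (intro nn_integral_cong) simp
  also have "\<dots> = ennreal (26 / 27) * emeasure \<mu> (\<Union>c\<in>?C. ?H c)"
    by (simp add: nn_integral_cmult emeasure_UN_countable[OF sets_first_reaches_at countableI_type disjoint(1)])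
  also have "\<dots> \<le> ennreal (26 / 27) * emeasure \<mu> (reaches f M)"
  proof (intro mult_left_mono emeasure_mono)
    show "(\<Union>c\<in>?C. ?H c) \<subseteq> reaches f M"
      by (force simp: first_reaches_at_def reaches_def)
  qed (simp_all add: sets_reaches)
  finally show ?thesis .
qed

lemma AE_height_bounded:
  assumes f: "height_function f"
  shows "AE P in \<mu>. \<exists>M. \<forall>n. f (snd (walk P n)) < M"
proof -
  interpret prob_space \<mu>
    by (rule prob_space_random_labeling)
  define M where "M k = 2 * (\<bar>f v0\<bar> + int k) + 1" for k
  have bound: "emeasure \<mu> (reaches f (M k)) \<le> ennreal ((26 / 27) ^ k)" for k
  proof (induction k)
    case 0
    show ?case
      using emeasure_le_1 by simp
  next
    case (Suc k)
    have "M (Suc k) = M k + 2" "f v0 < M k" "odd (M k)"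
      by (simp_all add: M_def)
    then have "emeasure \<mu> (reaches f (M (Suc k))) \<le> ennreal (26 / 27) * emeasure \<mu> (reaches f (M k))"
      using emeasure_reaches_step[OF f] by simp
    also have "\<dots> \<le> ennreal (26 / 27) * ennreal ((26 / 27) ^ k)"
      by (rule mult_left_mono[OF Suc.IH]) simp
    also have "\<dots> = ennreal ((26 / 27) ^ Suc k)"
      by (simp flip: ennreal_mult)
    finally show ?case .
  qed
  define Z where "Z = (\<Inter>k. reaches f (M k))"
  have Z_sets: "Z \<in> sets \<mu>"
    unfolding Z_def using sets_reaches by blast
  have "measure \<mu> Z \<le> (26 / 27) ^ k" for k
  proof -
    have "emeasure \<mu> Z \<le> emeasure \<mu> (reaches f (M k))"
      unfolding Z_def by (rule emeasure_mono) (auto simp: sets_reaches)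
    with bound[of k] show ?thesis
      by (simp add: emeasure_eq_measure)
  qed
  then have "measure \<mu> Z \<le> 0"
    by (intro LIMSEQ_le_const[OF LIMSEQ_power_zero]) auto
  then have "Z \<in> null_sets \<mu>"
    using Z_sets by (simp add: emeasure_eq_measure measure_le_0_iff null_setsI)
  then show ?thesis
  proof (rule AE_I')
    show "{P \<in> space \<mu>. \<not> (\<exists>M. \<forall>n. f (snd (walk P n)) < M)} \<subseteq> Z"
      by (auto simp: Z_def reaches_def not_less)
  qed
qed

end

section \<open>The hexagonal lattice\<close>

lemma hex_nbrs_simps [simp]:
  "hex_nbrs (i, j, False) = {(i, j, True), (i - 1, j, True), (i, j - 1, True)}"
  "hex_nbrs (i, j, True) = {(i, j, False), (i + 1, j, False), (i, j + 1, False)}"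
  by (simp_all add: hex_nbrs_def)

interpretation hex: cubic_graph hex_nbrs
proof
  fix v w :: hexv
  show "w \<in> hex_nbrs v \<Longrightarrow> v \<in> hex_nbrs w"
    by (cases v; cases w) (auto simp: hex_nbrs_def split: bool.splits)
  show "card (hex_nbrs v) = 3"
    by (cases v) (auto simp: hex_nbrs_def split: bool.splits)
qed

definition level_a :: "hexv \<Rightarrow> int" where
  "level_a = (\<lambda>(i, j, b). 2 * (i + j) + (if b then 1 else 0))"

definition level_b :: "hexv \<Rightarrow> int" where
  "level_b = (\<lambda>(i, j, b). - 2 * i - (if b then 1 else 0))"

definition level_c :: "hexv \<Rightarrow> int" where
  "level_c = (\<lambda>(i, j, b). - 2 * j - (if b then 1 else 0))"

lemma height_function_level_a: "hex.height_function level_a"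
  unfolding hex.height_function_def
proof (intro conjI allI impI ballI)
  fix v w :: hexv
  assume "w \<in> hex_nbrs v"
  then show "\<bar>level_a w - level_a v\<bar> = 1"
    by (cases v) (auto simp: level_a_def split: bool.splits)
next
  fix c :: hexv
  assume "odd (level_a c)"
  then obtain i j where "c = (i, j, True)"
    by (cases c) (auto simp: level_a_def split: if_splits)
  then show "\<exists>w1 w2. w1 \<noteq> w2 \<and> w1 \<in> hex_nbrs c \<and> w2 \<in> hex_nbrs c \<and>
      level_a w1 = level_a c + 1 \<and> level_a w2 = level_a c + 1"
    by (intro exI[of _ "(i + 1, j, False)"] exI[of _ "(i, j + 1, False)"]) (simp add: level_a_def)
qed

lemma height_function_level_b: "hex.height_function level_b"
  unfolding hex.height_function_def
proof (intro conjI allI impI ballI)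
  fix v w :: hexv
  assume "w \<in> hex_nbrs v"
  then show "\<bar>level_b w - level_b v\<bar> = 1"
    by (cases v) (auto simp: level_b_def split: bool.splits)
next
  fix c :: hexv
  assume "odd (level_b c)"
  then obtain i j where "c = (i, j, True)"
    by (cases c) (auto simp: level_b_def split: if_splits)
  then show "\<exists>w1 w2. w1 \<noteq> w2 \<and> w1 \<in> hex_nbrs c \<and> w2 \<in> hex_nbrs c \<and>
      level_b w1 = level_b c + 1 \<and> level_b w2 = level_b c + 1"
    by (intro exI[of _ "(i, j, False)"] exI[of _ "(i, j + 1, False)"]) (simp add: level_b_def)
qed

lemma height_function_level_c: "hex.height_function level_c"
  unfolding hex.height_function_def
proof (intro conjI allI impI ballI)
  fix v w :: hexv
  assume "w \<in> hex_nbrs v"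
  then show "\<bar>level_c w - level_c v\<bar> = 1"
    by (cases v) (auto simp: level_c_def split: bool.splits)
next
  fix c :: hexv
  assume "odd (level_c c)"
  then obtain i j where "c = (i, j, True)"
    by (cases c) (auto simp: level_c_def split: if_splits)
  then show "\<exists>w1 w2. w1 \<noteq> w2 \<and> w1 \<in> hex_nbrs c \<and> w2 \<in> hex_nbrs c \<and>
      level_c w1 = level_c c + 1 \<and> level_c w2 = level_c c + 1"
    by (intro exI[of _ "(i, j, False)"] exI[of _ "(i + 1, j, False)"]) (simp add: level_c_def)
qed

lemma finite_hex_region: "finite {v. level_a v < A \<and> level_b v < B \<and> level_c v < C}"
proof (rule finite_subset)
  let ?K = "\<bar>A\<bar> + \<bar>B\<bar> + \<bar>C\<bar> + 3"
  show "{v. level_a v < A \<and> level_b v < B \<and> level_c v < C} \<subseteq> {-?K..?K} \<times> {-?K..?K} \<times> UNIV"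
    by (auto simp: level_a_def level_b_def level_c_def split: if_splits)
qed simp

theorem theorem4p3:
  fixes v0 :: hexv and l :: nat
  assumes "l \<in> {1..deg hex_nbrs v0}"
  shows "{P \<in> space (random_labeling hex_nbrs). walk_cycles hex_nbrs P v0 l}
           \<in> sets (random_labeling hex_nbrs)
       \<and> emeasure (random_labeling hex_nbrs)
           {P \<in> space (random_labeling hex_nbrs). walk_cycles hex_nbrs P v0 l} = 1"
proof -
  interpret cubic_walk hex_nbrs v0 l
    using assms by unfold_locales simp
  interpret prob_space "random_labeling hex_nbrs"
    by (rule prob_space_random_labeling)
  have "AE P in random_labeling hex_nbrs. walk_cycles hex_nbrs P v0 l"
    using AE_height_bounded[OF height_function_level_a] AE_height_bounded[OF height_function_level_b]
      AE_height_bounded[OF height_function_level_c]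
  proof eventually_elim
    case (elim P)
    then obtain A B C where "\<forall>n. level_a (snd (walk P n)) < A" "\<forall>n. level_b (snd (walk P n)) < B"
      "\<forall>n. level_c (snd (walk P n)) < C"
      by blast
    then have "range (\<lambda>n. snd (walk P n)) \<subseteq> {v. level_a v < A \<and> level_b v < B \<and> level_c v < C}"
      by auto
    then show ?case
      by (intro walk_cycles_if_finite_visits finite_subset[OF _ finite_hex_region])
  qed
  moreover have "{P \<in> space (random_labeling hex_nbrs). walk_cycles hex_nbrs P v0 l}
      \<in> sets (random_labeling hex_nbrs)"
    by (rule sets_walk_cycles)
  ultimately show ?thesis
    by (auto intro: emeasure_eq_1_AE)
qed

end
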